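(* Let $G$ be a weighted undirected graph with internal vertex set $I$, boundary vertex set $X$, edge set $E$ and positive weights $w$, and let $S$ be its min cut function on $2^X$. Then a point $f\in\mathbb R^X$ lies in $F_S$ if and only if $f=\Phi_v$ for some flow $v$ on $G$.
   Context: Each edge is a pair of distinct vertices of $I\cup X$. A cut is a subset $r\subseteq I\cup X$; its edge set $\eth r$ is the set of edges with exactly one vertex in $r$, and $|\eth r|:=\sum_{e\in\eth r}w(e)$. The min cut function is $S(A):=\min\{|\eth r|: r\subseteq I\cup X,\ r\cap X=A\}$ for $A\subseteq X$. Fix an arbitrary orientation of each edge and set $s(i,e)=+1$ if $e$ points toward vertex $i\in e$ and $-1$ otherwise. A flow is a function $v:E\to\mathbb R$ with $|v(e)|\le w(e)$ for all $e$ and $\sum_{e\ni i}s(i,e)v(e)=0$ for every $i\in I$; its boundary flux is $\Phi_v(x):=\sum_{e\ni x}s(x,e)v(e)$ for $x\in X$. $F_S$ is the set of $f\in\mathbb R^X$ with $\big|\sum_{x\in A}f(x)\big|\le S(A)$ for all $A\subseteq X$. *)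

theory Defs
  imports Complex_Main
begin

text \<open>Edges are 2-element sets of vertices; an orientation is given by a function
  hd_of choosing the head of each edge.\<close>

definition orient_sign :: "('a set \<Rightarrow> 'a) \<Rightarrow> 'a \<Rightarrow> 'a set \<Rightarrow> real" where
  "orient_sign hd_of i e = (if hd_of e = i then 1 else -1)"

definition cut_edges :: "'a set set \<Rightarrow> 'a set \<Rightarrow> 'a set set" where
  "cut_edges E r = {e \<in> E. card (e \<inter> r) = 1}"

definition cut_weight :: "'a set set \<Rightarrow> ('a set \<Rightarrow> real) \<Rightarrow> 'a set \<Rightarrow> real" where
  "cut_weight E w r = (\<Sum>e\<in>cut_edges E r. w e)"

definition min_cut :: "'a set \<Rightarrow> 'a set \<Rightarrow> 'a set set \<Rightarrow> ('a set \<Rightarrow> real) \<Rightarrow> 'a set \<Rightarrow> real" where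
  "min_cut I X E w A = Min ((cut_weight E w) ` {r. r \<subseteq> I \<union> X \<and> r \<inter> X = A})"

definition is_flow :: "'a set \<Rightarrow> 'a set set \<Rightarrow> ('a set \<Rightarrow> real) \<Rightarrow> ('a set \<Rightarrow> 'a)
    \<Rightarrow> ('a set \<Rightarrow> real) \<Rightarrow> bool" where
  "is_flow I E w hd_of v \<longleftrightarrow>
     (\<forall>e\<in>E. \<bar>v e\<bar> \<le> w e) \<and>
     (\<forall>i\<in>I. (\<Sum>e\<in>{e\<in>E. i \<in> e}. orient_sign hd_of i e * v e) = 0)"

definition boundary_flux :: "'a set set \<Rightarrow> ('a set \<Rightarrow> 'a) \<Rightarrow> ('a set \<Rightarrow> real) \<Rightarrow> 'a \<Rightarrow> real" where
  "boundary_flux E hd_of v x = (\<Sum>e\<in>{e\<in>E. x \<in> e}. orient_sign hd_of x e * v e)"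

text \<open>F_S: points of R^X (functions, only values on X matter).\<close>
definition F_poly :: "'a set \<Rightarrow> ('a set \<Rightarrow> real) \<Rightarrow> ('a \<Rightarrow> real) set" where
  "F_poly X S = {f. \<forall>A\<subseteq>X. \<bar>\<Sum>x\<in>A. f x\<bar> \<le> S A}"

end

theory Submission
  imports Defs "HOL-Analysis.Analysis"
begin

(* The inclusion of fluxes in F_S is the cut bound: summing the flux of a flow over a minimum
   cut r with r \<inter> X = A, conservation at the internal vertices leaves only the net flow across
   the edges of the cut, which is at most their total weight.

   For the converse we prove Gale's feasibility theorem: a demand g on the vertices with total
   zero and g(r) \<le> |\<eth>r| for every vertex set r is the flux of a flow. By compactness of the box
   of capacity-respecting edge values there is an assignment v minimising the squared excess
   \<Sum>u. (g u - \<Phi>_v u)^2. Pushing a little more out of u along an edge that is not saturated in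
   that direction would decrease it, unless the excess at u is at most the excess at the other
   endpoint. So every edge leaving the set r of vertices of positive excess is saturated
   outwards, and the total excess on r is g(r) - |\<eth>r| \<le> 0: r is empty. As the total excess
   is zero, it vanishes everywhere. *)

locale oriented_graph =
  fixes V :: "'a set" and E :: "'a set set" and hd_of :: "'a set \<Rightarrow> 'a"
  assumes finite_vertices: "finite V"
    and edge_pair: "e \<in> E \<Longrightarrow> \<exists>a b. e = {a, b} \<and> a \<noteq> b \<and> a \<in> V \<and> b \<in> V"
    and head_in_edge: "e \<in> E \<Longrightarrow> hd_of e \<in> e"
begin

lemma edge_subset_vertices: "e \<in> E \<Longrightarrow> e \<subseteq> V"
  using edge_pair by blast

lemma finite_edges: "finite E"
  using finite_vertices edge_subset_vertices by (meson PowI finite_Pow_iff finite_subset subsetI)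

lemma orient_sign_other_end:
  assumes "e \<in> E" "u \<in> e" "u' \<in> e" "u \<noteq> u'"
  shows "orient_sign hd_of u' e = - orient_sign hd_of u e"
  using assms edge_pair[of e] head_in_edge[of e] by (auto simp: orient_sign_def)

lemma cut_edge_ends:
  assumes "e \<in> cut_edges E r"
  obtains u u' where "e = {u, u'}" "u \<noteq> u'" "u \<in> r" "u' \<notin> r"
proof -
  have "e \<in> E" "card (e \<inter> r) = 1"
    using assms by (auto simp: cut_edges_def)
  then obtain a b where ab: "e = {a, b}" "a \<noteq> b"
    using edge_pair by blast
  have "(a \<in> r \<and> b \<notin> r) \<or> (b \<in> r \<and> a \<notin> r)"
    using ab \<open>card (e \<inter> r) = 1\<close> by (cases "a \<in> r"; cases "b \<in> r") auto
  then show thesis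
    using that ab by (metis insert_commute)
qed

lemma edge_flux_outside_cut:
  assumes "e \<in> E" "e \<notin> cut_edges E r"
  shows "(\<Sum>u\<in>e \<inter> r. orient_sign hd_of u e * c) = 0"
proof -
  obtain a b where ab: "e = {a, b}" "a \<noteq> b"
    using assms(1) edge_pair by blast
  have "card (e \<inter> r) \<noteq> 1"
    using assms by (simp add: cut_edges_def)
  then have "e \<inter> r = {} \<or> e \<inter> r = e"
    using ab by (cases "a \<in> r"; cases "b \<in> r") auto
  moreover have "orient_sign hd_of b e = - orient_sign hd_of a e"
    using orient_sign_other_end assms(1) ab by blast
  ultimately show ?thesis
    using ab by (auto simp: algebra_simps)
qed

lemma sum_boundary_flux_eq_cut:
  assumes "finite r"
  shows "(\<Sum>u\<in>r. boundary_flux E hd_of v u) =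
    (\<Sum>e\<in>cut_edges E r. \<Sum>u\<in>e \<inter> r. orient_sign hd_of u e * v e)"
proof -
  have "(\<Sum>u\<in>r. boundary_flux E hd_of v u) =
      (\<Sum>u\<in>r. \<Sum>e\<in>E. if u \<in> e then orient_sign hd_of u e * v e else 0)"
    using finite_edges by (simp add: boundary_flux_def sum.inter_filter)
  also have "\<dots> = (\<Sum>e\<in>E. \<Sum>u\<in>e \<inter> r. orient_sign hd_of u e * v e)"
    using assms by (subst sum.swap) (simp add: sum.inter_filter[symmetric] Int_def conj_commute)
  also have "\<dots> = (\<Sum>e\<in>cut_edges E r. \<Sum>u\<in>e \<inter> r. orient_sign hd_of u e * v e)"
    using finite_edges edge_flux_outside_cut
    by (intro sum.mono_neutral_right) (auto simp: cut_edges_def)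
  finally show ?thesis .
qed

lemma cut_edges_vertices: "cut_edges E V = {}"
  using edge_pair by (fastforce simp: cut_edges_def insert_absorb)

lemma sum_boundary_flux_vertices: "(\<Sum>u\<in>V. boundary_flux E hd_of v u) = 0"
  using sum_boundary_flux_eq_cut[OF finite_vertices] by (simp add: cut_edges_vertices)

lemma abs_sum_boundary_flux_le_cut_weight:
  assumes "\<forall>e\<in>E. \<bar>v e\<bar> \<le> w e" "finite r"
  shows "\<bar>\<Sum>u\<in>r. boundary_flux E hd_of v u\<bar> \<le> cut_weight E w r"
proof -
  have edge_bound: "\<bar>\<Sum>u\<in>e \<inter> r. orient_sign hd_of u e * v e\<bar> \<le> w e"
    if cut: "e \<in> cut_edges E r" for e
  proof -
    obtain u u' where "e = {u, u'}" "u \<noteq> u'" "u \<in> r" "u' \<notin> r"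
      using cut_edge_ends[OF cut] by blast
    then have "e \<inter> r = {u}" by auto
    then show ?thesis
      using cut assms(1) by (auto simp: cut_edges_def abs_mult orient_sign_def)
  qed
  have "\<bar>\<Sum>u\<in>r. boundary_flux E hd_of v u\<bar> \<le>
      (\<Sum>e\<in>cut_edges E r. \<bar>\<Sum>u\<in>e \<inter> r. orient_sign hd_of u e * v e\<bar>)"
    unfolding sum_boundary_flux_eq_cut[OF assms(2)] by (rule sum_abs)
  also have "\<dots> \<le> cut_weight E w r"
    unfolding cut_weight_def using edge_bound by (rule sum_mono)
  finally show ?thesis .
qed

lemma boundary_flux_update:
  assumes "e \<in> E"
  shows "boundary_flux E hd_of (v(e := v e + c)) z =
    boundary_flux E hd_of v z + (if z \<in> e then orient_sign hd_of z e * c else 0)"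
proof -
  let ?N = "{e'\<in>E. z \<in> e'}"
  have "finite ?N" using finite_edges by simp
  then show ?thesis
    using assms unfolding boundary_flux_def
    by (cases "z \<in> e") (auto simp: sum.remove[of ?N e] algebra_simps intro!: sum.cong)
qed

end

locale capacitated_graph = oriented_graph +
  fixes w :: "'a set \<Rightarrow> real"
  assumes capacity_nonneg: "e \<in> E \<Longrightarrow> 0 \<le> w e"
begin

(* Values off E are pinned to 0 so that the box is compact in the product topology. *)
definition capacity_box :: "('a set \<Rightarrow> real) set" where
  "capacity_box = PiE UNIV (\<lambda>e. if e \<in> E then {- w e..w e} else {0})"

lemma mem_capacity_box:
  "v \<in> capacity_box \<longleftrightarrow> (\<forall>e\<in>E. \<bar>v e\<bar> \<le> w e) \<and> (\<forall>e. e \<notin> E \<longrightarrow> v e = 0)"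
  by (auto simp: capacity_box_def PiE_iff abs_le_iff)

lemma compact_capacity_box: "compact capacity_box"
proof -
  have "compactin (product_topology (\<lambda>_. euclidean) UNIV) capacity_box"
    unfolding capacity_box_def by (subst compactin_PiE) auto
  then show ?thesis
    by (simp add: euclidean_product_topology)
qed

definition excess :: "('a \<Rightarrow> real) \<Rightarrow> ('a set \<Rightarrow> real) \<Rightarrow> 'a \<Rightarrow> real" where
  "excess g v u = g u - boundary_flux E hd_of v u"

definition sq_excess :: "('a \<Rightarrow> real) \<Rightarrow> ('a set \<Rightarrow> real) \<Rightarrow> real" where
  "sq_excess g v = (\<Sum>u\<in>V. (excess g v u)\<^sup>2)"

lemma sq_excess_arg_min_exists: "\<exists>v. is_arg_min (sq_excess g) (\<lambda>v. v \<in> capacity_box) v"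
proof -
  have "(\<lambda>_. 0) \<in> capacity_box"
    using capacity_nonneg by (simp add: mem_capacity_box)
  moreover have "continuous_on capacity_box (sq_excess g)"
    unfolding sq_excess_def excess_def boundary_flux_def
    by (intro continuous_intros continuous_on_subset[OF continuous_on_product_coordinates]) simp
  ultimately obtain v where "v \<in> capacity_box" "\<forall>v'\<in>capacity_box. sq_excess g v \<le> sq_excess g v'"
    using continuous_attains_inf[OF compact_capacity_box] by blast
  then show ?thesis
    by (auto simp: is_arg_min_def not_less)
qed

lemma sq_excess_push:
  assumes e: "e \<in> E" "u \<in> e" "u' \<in> e" "u \<noteq> u'"
  shows "sq_excess g (v(e := v e + orient_sign hd_of u e * d)) =
    sq_excess g v + 2 * d * (d - (excess g v u - excess g v u'))"
proof -
  let ?v' = "v(e := v e + orient_sign hd_of u e * d)"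
  have e_ends: "e = {u, u'}"
    using e edge_pair[of e] by auto
  have ex_u: "excess g ?v' u = excess g v u - d"
    using boundary_flux_update[OF e(1)] e(2)
    by (simp add: excess_def orient_sign_def)
  moreover have ex_u': "excess g ?v' u' = excess g v u' + d"
    using boundary_flux_update[OF e(1)] e(3) orient_sign_other_end[OF e]
    by (simp add: excess_def orient_sign_def)
  moreover have "excess g ?v' z = excess g v z" if "z \<notin> {u, u'}" for z
    using boundary_flux_update[OF e(1)] that e_ends by (simp add: excess_def)
  moreover have "{u, u'} \<subseteq> V"
    using edge_subset_vertices[OF e(1)] e_ends by simp
  ultimately have "sq_excess g ?v' - sq_excess g v =
      (\<Sum>z\<in>{u, u'}. (excess g ?v' z)\<^sup>2 - (excess g v z)\<^sup>2)"
    unfolding sq_excess_def sum_subtractf[symmetric]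
    by (intro sum.mono_neutral_right finite_vertices) auto
  also have "\<dots> = 2 * d * (d - (excess g v u - excess g v u'))"
    using e(4) by (simp add: ex_u ex_u') (simp add: power2_eq_square algebra_simps)
  finally show ?thesis
    by simp
qed

lemma arg_min_excess_le_across_unsaturated_edge:
  assumes v: "is_arg_min (sq_excess g) (\<lambda>v. v \<in> capacity_box) v"
    and e: "e \<in> E" "u \<in> e" "u' \<in> e" "u \<noteq> u'"
    and unsaturated: "orient_sign hd_of u e * v e < w e"
  shows "excess g v u \<le> excess g v u'"
proof (rule ccontr)
  let ?s = "orient_sign hd_of u e"
  assume "\<not> excess g v u \<le> excess g v u'"
  define d where "d = min (w e - ?s * v e) ((excess g v u - excess g v u') / 2)"
  have d: "0 < d" "d \<le> w e - ?s * v e" "d \<le> (excess g v u - excess g v u') / 2"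
    using unsaturated \<open>\<not> excess g v u \<le> excess g v u'\<close> unfolding d_def
    by (auto simp: min_def)
  have v_box: "v \<in> capacity_box"
    using v by (simp add: is_arg_min_def)
  then have "\<bar>v e + ?s * d\<bar> \<le> w e"
    using e(1) d(1,2) by (auto simp: mem_capacity_box orient_sign_def abs_le_iff)
  then have "v(e := v e + ?s * d) \<in> capacity_box"
    using v_box e(1) by (auto simp: mem_capacity_box)
  then have "\<not> sq_excess g v + 2 * d * (d - (excess g v u - excess g v u')) < sq_excess g v"
    using v sq_excess_push[OF e] unfolding is_arg_min_def by metis
  moreover have "d * (d - (excess g v u - excess g v u')) < 0"
    using d by (intro mult_pos_neg) auto
  ultimately show False
    by linarith
qed

lemma arg_min_positive_excess_cut_saturated:
  assumes v: "is_arg_min (sq_excess g) (\<lambda>v. v \<in> capacity_box) v"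
    and r: "r = {u \<in> V. 0 < excess g v u}"
  shows "(\<Sum>u\<in>r. boundary_flux E hd_of v u) = cut_weight E w r"
proof -
  have "(\<Sum>z\<in>e \<inter> r. orient_sign hd_of z e * v e) = w e" if cut: "e \<in> cut_edges E r" for e
  proof -
    obtain u u' where ends: "e = {u, u'}" "u \<noteq> u'" "u \<in> r" "u' \<notin> r"
      using cut_edge_ends[OF cut] by blast
    have e: "e \<in> E"
      using cut by (simp add: cut_edges_def)
    then have "u' \<in> V"
      using edge_subset_vertices ends(1) by blast
    then have "excess g v u' < excess g v u"
      using ends(3,4) r by auto
    then have "\<not> orient_sign hd_of u e * v e < w e"
      using arg_min_excess_le_across_unsaturated_edge[OF v e] ends(1,2) by fastforce
    moreover have "\<bar>orient_sign hd_of u e * v e\<bar> \<le> w e"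
      using v e by (simp add: is_arg_min_def mem_capacity_box abs_mult orient_sign_def)
    moreover have "e \<inter> r = {u}"
      using ends by auto
    ultimately show ?thesis
      by simp
  qed
  moreover have "finite r"
    using finite_vertices r by simp
  ultimately show ?thesis
    unfolding cut_weight_def by (simp add: sum_boundary_flux_eq_cut)
qed

theorem cut_condition_imp_flow:
  assumes total: "(\<Sum>u\<in>V. g u) = 0"
    and cut: "\<And>r. r \<subseteq> V \<Longrightarrow> (\<Sum>u\<in>r. g u) \<le> cut_weight E w r"
  shows "\<exists>v. (\<forall>e\<in>E. \<bar>v e\<bar> \<le> w e) \<and> (\<forall>u\<in>V. boundary_flux E hd_of v u = g u)"
proof -
  obtain v where v: "is_arg_min (sq_excess g) (\<lambda>v. v \<in> capacity_box) v"
    using sq_excess_arg_min_exists by blast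
  have sum_excess: "(\<Sum>u\<in>q. excess g v u) = (\<Sum>u\<in>q. g u) - (\<Sum>u\<in>q. boundary_flux E hd_of v u)"
    for q by (simp add: excess_def sum_subtractf)
  define r where "r = {u \<in> V. 0 < excess g v u}"
  have "r = {}"
  proof (rule ccontr)
    assume "r \<noteq> {}"
    then have "0 < (\<Sum>u\<in>r. excess g v u)"
      using finite_vertices by (intro sum_pos) (auto simp: r_def)
    moreover have "(\<Sum>u\<in>r. excess g v u) = (\<Sum>u\<in>r. g u) - cut_weight E w r"
      using sum_excess arg_min_positive_excess_cut_saturated[OF v r_def] by simp
    moreover have "(\<Sum>u\<in>r. g u) \<le> cut_weight E w r"
      using cut by (simp add: r_def)
    ultimately show False
      by linarith
  qed
  then have "0 \<le> - excess g v u" if "u \<in> V" for u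
    using that by (auto simp: r_def not_less)
  moreover have "(\<Sum>u\<in>V. - excess g v u) = 0"
    using sum_excess total sum_boundary_flux_vertices by (simp add: sum_negf)
  ultimately have "\<forall>u\<in>V. - excess g v u = 0"
    by (simp only: sum_nonneg_eq_0_iff[OF finite_vertices])
  moreover have "\<forall>e\<in>E. \<bar>v e\<bar> \<le> w e"
    using v by (simp add: is_arg_min_def mem_capacity_box)
  ultimately show ?thesis
    by (auto simp: excess_def)
qed

end

lemma min_cut_le_cut_weight:
  assumes "finite (I \<union> X)" "r \<subseteq> I \<union> X"
  shows "min_cut I X E w (r \<inter> X) \<le> cut_weight E w r"
  unfolding min_cut_def using assms by (intro Min_le) (auto intro: finite_subset)

lemma min_cut_attained:
  assumes "finite (I \<union> X)" "A \<subseteq> X"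
  obtains r where "r \<subseteq> I \<union> X" "r \<inter> X = A" "min_cut I X E w A = cut_weight E w r"
proof -
  have "finite {r. r \<subseteq> I \<union> X \<and> r \<inter> X = A}"
    using assms(1) by (auto intro: finite_subset)
  moreover have "A \<in> {r. r \<subseteq> I \<union> X \<and> r \<inter> X = A}"
    using assms(2) by auto
  ultimately have "min_cut I X E w A \<in> cut_weight E w ` {r. r \<subseteq> I \<union> X \<and> r \<inter> X = A}"
    unfolding min_cut_def by (intro Min_in) auto
  then show thesis
    using that by blast
qed

lemma flow_boundary_flux_in_F_poly:
  assumes "oriented_graph (I \<union> X) E hd_of"
    and flow: "is_flow I E w hd_of v" and f: "\<forall>x\<in>X. f x = boundary_flux E hd_of v x"
  shows "f \<in> F_poly X (min_cut I X E w)"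
  unfolding F_poly_def
proof (intro CollectI allI impI)
  interpret oriented_graph "I \<union> X" E hd_of by fact
  fix A assume "A \<subseteq> X"
  obtain r where r: "r \<subseteq> I \<union> X" "r \<inter> X = A" "min_cut I X E w A = cut_weight E w r"
    by (rule min_cut_attained[OF finite_vertices \<open>A \<subseteq> X\<close>])
  have "finite r"
    using finite_vertices r(1) by (rule finite_subset[rotated])
  moreover have "(\<Sum>u\<in>r - X. boundary_flux E hd_of v u) = 0"
    using flow r(1) by (intro sum.neutral) (auto simp: is_flow_def boundary_flux_def)
  moreover have "(\<Sum>u\<in>r \<inter> X. boundary_flux E hd_of v u) = (\<Sum>x\<in>A. f x)"
    using f r(2) by (intro sum.cong) auto
  ultimately have "(\<Sum>x\<in>A. f x) = (\<Sum>u\<in>r. boundary_flux E hd_of v u)"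
    by (metis add.right_neutral sum.Int_Diff)
  moreover have "\<bar>\<Sum>u\<in>r. boundary_flux E hd_of v u\<bar> \<le> cut_weight E w r"
    using flow \<open>finite r\<close> by (intro abs_sum_boundary_flux_le_cut_weight) (auto simp: is_flow_def)
  ultimately show "\<bar>\<Sum>x\<in>A. f x\<bar> \<le> min_cut I X E w A"
    using r(3) by simp
qed

lemma F_poly_imp_flow:
  assumes "capacitated_graph (I \<union> X) E hd_of w" "I \<inter> X = {}"
    and F: "f \<in> F_poly X (min_cut I X E w)"
  shows "\<exists>v. is_flow I E w hd_of v \<and> (\<forall>x\<in>X. f x = boundary_flux E hd_of v x)"
proof -
  interpret capacitated_graph "I \<union> X" E hd_of w by fact
  define g where "g u = (if u \<in> X then f u else 0)" for u
  have sum_g: "(\<Sum>u\<in>r. g u) = (\<Sum>x\<in>r \<inter> X. f x)" if "r \<subseteq> I \<union> X" for r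
  proof -
    have "finite r"
      using that finite_vertices by (rule finite_subset)
    moreover have "r \<inter> X = {u \<in> r. u \<in> X}"
      by auto
    ultimately show ?thesis
      by (simp add: g_def sum.inter_filter)
  qed
  have F_bound: "\<bar>\<Sum>x\<in>r \<inter> X. f x\<bar> \<le> cut_weight E w r" if "r \<subseteq> I \<union> X" for r
  proof -
    have "\<bar>\<Sum>x\<in>r \<inter> X. f x\<bar> \<le> min_cut I X E w (r \<inter> X)"
      using F unfolding F_poly_def by blast
    also have "\<dots> \<le> cut_weight E w r"
      using finite_vertices that by (rule min_cut_le_cut_weight)
    finally show ?thesis .
  qed
  have "(\<Sum>u\<in>I \<union> X. g u) = 0"
    using F_bound[of "I \<union> X"] sum_g[of "I \<union> X"]
    by (simp add: cut_weight_def cut_edges_vertices)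
  moreover have "(\<Sum>u\<in>r. g u) \<le> cut_weight E w r" if "r \<subseteq> I \<union> X" for r
    using F_bound[OF that] sum_g[OF that] by linarith
  ultimately obtain v where v: "\<forall>e\<in>E. \<bar>v e\<bar> \<le> w e" "\<forall>u\<in>I \<union> X. boundary_flux E hd_of v u = g u"
    using cut_condition_imp_flow by blast
  then have "is_flow I E w hd_of v"
    using \<open>I \<inter> X = {}\<close> by (auto simp: is_flow_def g_def boundary_flux_def)
  moreover have "\<forall>x\<in>X. f x = boundary_flux E hd_of v x"
    using v(2) by (simp add: g_def)
  ultimately show ?thesis
    by blast
qed

theorem theorem29:
  fixes I X :: "'a set" and E :: "'a set set" and w :: "'a set \<Rightarrow> real"
    and hd_of :: "'a set \<Rightarrow> 'a" and f :: "'a \<Rightarrow> real"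
  assumes "finite I" and "finite X" and "I \<inter> X = {}"
    and "\<forall>e\<in>E. \<exists>a b. e = {a, b} \<and> a \<noteq> b \<and> a \<in> I \<union> X \<and> b \<in> I \<union> X"
    and "\<forall>e\<in>E. w e > 0"
    and "\<forall>e\<in>E. hd_of e \<in> e"
  shows "f \<in> F_poly X (min_cut I X E w) \<longleftrightarrow>
         (\<exists>v. is_flow I E w hd_of v \<and> (\<forall>x\<in>X. f x = boundary_flux E hd_of v x))"
proof -
  have graph: "capacitated_graph (I \<union> X) E hd_of w"
    using assms by unfold_locales (auto simp: less_imp_le)
  then have "oriented_graph (I \<union> X) E hd_of"
    by (rule capacitated_graph.axioms)
  then show ?thesis
    using F_poly_imp_flow[OF graph \<open>I \<inter> X = {}\<close>] flow_boundary_flux_in_F_poly by blast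
qed

end
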